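(* Let $G=G_{\pm}(x)=3+2\{\cos(2\pi x)\pm\cos(12\pi x)\pm\cos(14\pi x)\}$ on $\mathbb{T}=\mathbb{R}/\mathbb{Z}$ (either sign), and let $Z$ be the set of local maximum points of $G$ in $\mathbb{T}$. Then for every $t>0$, $$\operatorname{Var}(G^t)<2\sum_{\zeta\in Z}G^t(\zeta),$$ where $\operatorname{Var}$ denotes total variation over one period $\mathbb{T}$. In particular $\operatorname{Var}(G_{\pm})<74$.
   Context: $\operatorname{Var}(\psi)=\operatorname{Var}(\psi,\mathbb{T})$ is the total variation of the $1$-periodic function $\psi$ over one period. *)

theory Defs
  imports "HOL-Analysis.Analysis"
begin

definition total_variation :: "(real \<Rightarrow> real) \<Rightarrow> real \<Rightarrow> real \<Rightarrow> real" where
  "total_variation f a b =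
     Sup {(\<Sum>i<n. \<bar>f (x (Suc i)) - f (x i)\<bar>) | n x.
            x 0 = a \<and> x n = b \<and> (\<forall>i<n. x i \<le> x (Suc i))}"

definition period_variation :: "(real \<Rightarrow> real) \<Rightarrow> real" where
  "period_variation f = total_variation f 0 1"

definition Gpm :: "real \<Rightarrow> real \<Rightarrow> real" where
  "Gpm s x = 3 + 2 * (cos (2*pi*x) + s * cos (12*pi*x) + s * cos (14*pi*x))"

definition local_max_point :: "(real \<Rightarrow> real) \<Rightarrow> real \<Rightarrow> bool" where
  "local_max_point f x \<longleftrightarrow> (\<exists>e>0. \<forall>y. \<bar>y - x\<bar> < e \<longrightarrow> f y \<le> f x)"

end

theory Submission
  imports Defs "HOL-Computational_Algebra.Polynomial"
begin

text \<open>By the Chebyshev identities \<open>G(x) = P(cos 2\<pi>x)\<close> for a polynomial \<open>P\<close> of degree 7, and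
  \<open>G \<ge> 0\<close> because it is a squared modulus. Sign changes of \<open>P'\<close> at explicit rational points
  isolate all six roots \<open>q\<^sub>1 < \<dots> < q\<^sub>6\<close> of \<open>P'\<close> inside \<open>(-1, 1)\<close>, so \<open>P\<close> is alternately
  increasing and decreasing between consecutive points of \<open>-1 = q\<^sub>0 < \<dots> < q\<^sub>7 = 1\<close>.
  Pulling back by \<open>cos 2\<pi>x\<close> cuts the period into fourteen intervals on which \<open>G\<^sup>t\<close> is monotone,
  hence \<open>Var(G\<^sup>t) \<le> 2 \<Sum>\<^sub>k |P(q\<^sub>k\<^sub>+\<^sub>1)\<^sup>t - P(q\<^sub>k)\<^sup>t|\<close>, an alternating sum equal to the values of
  \<open>P\<^sup>t\<close> at its peaks minus those at its valleys, interior ones counted twice. Each interior peak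
  gives two local maxima of \<open>G\<close> on the circle and the peak at an endpoint gives one, while the
  valley at the other endpoint has \<open>P = 1 > 0\<close>; this gives the strict inequality. For \<open>t = 1\<close>
  the peak values are bounded using the enclosures of the \<open>q\<^sub>k\<close> and a Lipschitz bound for \<open>P\<close>.\<close>

section \<open>Monotonicity and total variation\<close>

lemma mono_on_atMost_SucI:
  fixes f :: "nat \<Rightarrow> 'a::order"
  assumes "\<And>k. k < n \<Longrightarrow> f k \<le> f (Suc k)"
  shows "mono_on {..n} f"
proof (rule mono_onI)
  fix i j assume "i \<in> {..n}" "j \<in> {..n}" "i \<le> j"
  from \<open>i \<le> j\<close> \<open>j \<in> {..n}\<close> show "f i \<le> f j"
  proof (induction j rule: dec_induct)
    case (step m)
    then show ?case using assms[of m] by (auto intro: order_trans)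
  qed simp
qed

lemma strict_mono_on_atMost_SucI:
  fixes f :: "nat \<Rightarrow> 'a::order"
  assumes "\<And>k. k < n \<Longrightarrow> f k < f (Suc k)"
  shows "strict_mono_on {..n} f"
proof (rule strict_mono_onI)
  fix i j assume "i \<in> {..n}" "j \<in> {..n}" "i < j"
  then have "Suc i \<le> j" "j \<le> n" by auto
  then show "f i < f j"
  proof (induction j rule: dec_induct)
    case (step m)
    then show ?case using assms[of m] by (auto intro: less_trans)
  qed (use assms in simp)
qed

lemma monotonic_on_compose:
  assumes "mono_on A f \<or> antimono_on A f" "mono_on B g \<or> antimono_on B g" "g ` B \<subseteq> A"
  shows "mono_on B (f \<circ> g) \<or> antimono_on B (f \<circ> g)"
proof -
  have gB: "g x \<in> A" if "x \<in> B" for x using that assms(3) by blast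
  from assms(1,2) show ?thesis
  proof (elim disjE)
    assume f: "mono_on A f" and g: "mono_on B g"
    show ?thesis
      by (intro disjI1 monotone_onI) (simp add: gB monotone_onD[OF f] monotone_onD[OF g])
  next
    assume f: "mono_on A f" and g: "antimono_on B g"
    show ?thesis
      by (intro disjI2 monotone_onI) (simp add: gB monotone_onD[OF f] monotone_onD[OF g])
  next
    assume f: "antimono_on A f" and g: "mono_on B g"
    show ?thesis
      by (intro disjI2 monotone_onI) (simp add: gB monotone_onD[OF f] monotone_onD[OF g])
  next
    assume f: "antimono_on A f" and g: "antimono_on B g"
    show ?thesis
      by (intro disjI1 monotone_onI) (simp add: gB monotone_onD[OF f] monotone_onD[OF g])
  qed
qed

lemma total_variation_le_dominating:
  fixes f V :: "real \<Rightarrow> real"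
  assumes "a \<le> b"
    and dom: "\<And>u v. a \<le> u \<Longrightarrow> u \<le> v \<Longrightarrow> v \<le> b \<Longrightarrow> \<bar>f v - f u\<bar> \<le> V v - V u"
  shows "total_variation f a b \<le> V b - V a"
  unfolding total_variation_def
proof (rule cSup_least)
  let ?x = "\<lambda>i::nat. if i = 0 then a else b"
  have "\<bar>f (?x 1) - f (?x 0)\<bar> \<in> {(\<Sum>i<n. \<bar>f (x (Suc i)) - f (x i)\<bar>) | n x.
          x 0 = a \<and> x n = b \<and> (\<forall>i<n. x i \<le> x (Suc i))}"
    using \<open>a \<le> b\<close> by (intro CollectI exI[of _ "1::nat"] exI[of _ ?x]) auto
  then show "{(\<Sum>i<n. \<bar>f (x (Suc i)) - f (x i)\<bar>) | n x.
          x 0 = a \<and> x n = b \<and> (\<forall>i<n. x i \<le> x (Suc i))} \<noteq> {}" by blast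
next
  fix z assume "z \<in> {(\<Sum>i<n. \<bar>f (x (Suc i)) - f (x i)\<bar>) | n x.
          x 0 = a \<and> x n = b \<and> (\<forall>i<n. x i \<le> x (Suc i))}"
  then obtain n x where z: "z = (\<Sum>i<n. \<bar>f (x (Suc i)) - f (x i)\<bar>)"
    and x0: "x 0 = a" and xn: "x n = b" and steps: "\<forall>i<n. x i \<le> x (Suc i)" by blast
  have mono: "mono_on {..n} x" using steps by (intro mono_on_atMost_SucI) auto
  have "z \<le> (\<Sum>i<n. V (x (Suc i)) - V (x i))"
    unfolding z
  proof (rule sum_mono)
    fix i assume "i \<in> {..<n}"
    then show "\<bar>f (x (Suc i)) - f (x i)\<bar> \<le> V (x (Suc i)) - V (x i)"
      using mono_onD[OF mono, of 0 i] mono_onD[OF mono, of "Suc i" n] steps x0 xn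
      by (intro dom) auto
  qed
  also have "\<dots> = V b - V a" using sum_lessThan_telescope[of "\<lambda>i. V (x i)" n] x0 xn by simp
  finally show "z \<le> V b - V a" .
qed

lemma clamp_real: "(a::real) \<le> b \<Longrightarrow> clamp a b x = max a (min x b)"
  by (auto simp: clamp_def Basis_real_def max_def min_def)

lemma sum_clamp_telescope:
  fixes X :: "nat \<Rightarrow> real" and f :: "real \<Rightarrow> real"
  assumes "mono_on {..m} X" "X 0 \<le> y" "y \<le> X m"
  shows "f y - f (X 0) = (\<Sum>j<m. f (clamp (X j) (X (Suc j)) y) - f (X j))"
  using assms
proof (induction m arbitrary: y)
  case (Suc m)
  have mono: "mono_on {..m} X" using Suc.prems(1) by (rule mono_on_subset) auto
  have step: "X m \<le> X (Suc m)" using mono_onD[OF Suc.prems(1), of m "Suc m"] by simp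
  show ?case
  proof (cases "y \<le> X m")
    case True
    then have "clamp (X m) (X (Suc m)) y = X m" using step by (simp add: clamp_real)
    then show ?thesis using Suc.IH[OF mono Suc.prems(2) True] by simp
  next
    case False
    have "clamp (X j) (X (Suc j)) y = clamp (X j) (X (Suc j)) (X m)" if "j < m" for j
      using that False mono_onD[OF mono, of "Suc j" m] mono_onD[OF mono, of j "Suc j"]
      by (simp add: clamp_real)
    moreover have "clamp (X m) (X (Suc m)) y = y" using False Suc.prems(3) step
      by (simp add: clamp_real)
    moreover have "X 0 \<le> X m" using mono_onD[OF mono, of 0 m] by simp
    ultimately show ?thesis using Suc.IH[OF mono _ order_refl] by simp
  qed
qed simp

lemma abs_diff_monotone_split:
  fixes f :: "real \<Rightarrow> real"
  assumes "mono_on {lo..hi} f \<or> antimono_on {lo..hi} f" "lo \<le> u" "u \<le> v" "v \<le> hi"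
  shows "\<bar>f v - f u\<bar> = \<bar>f v - f lo\<bar> - \<bar>f u - f lo\<bar>"
  using assms(1)
proof
  assume "mono_on {lo..hi} f"
  then have "f lo \<le> f u" "f u \<le> f v" using assms(2-4) by (auto intro: mono_onD)
  then show ?thesis by simp
next
  assume anti: "antimono_on {lo..hi} f"
  have "f u \<le> f lo" "f v \<le> f u"
    using monotone_onD[OF anti, of lo u] monotone_onD[OF anti, of u v] assms(2-4) by auto
  then show ?thesis by simp
qed

text \<open>The majorant \<open>V y\<close> is the variation accumulated up to \<open>y\<close>, computed piece by piece.\<close>
lemma total_variation_piecewise_monotone:
  fixes f :: "real \<Rightarrow> real" and X :: "nat \<Rightarrow> real"
  assumes X0: "X 0 = a" and Xm: "X m = b" and mono: "mono_on {..m} X"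
    and pieces: "\<And>j. j < m \<Longrightarrow> mono_on {X j..X (Suc j)} f \<or> antimono_on {X j..X (Suc j)} f"
  shows "total_variation f a b \<le> (\<Sum>j<m. \<bar>f (X (Suc j)) - f (X j)\<bar>)"
proof -
  define V where "V y = (\<Sum>j<m. \<bar>f (clamp (X j) (X (Suc j)) y) - f (X j)\<bar>)" for y
  have step: "X j \<le> X (Suc j)" if "j < m" for j using that mono_onD[OF mono, of j "Suc j"] by simp
  have "total_variation f a b \<le> V b - V a"
  proof (rule total_variation_le_dominating)
    show "a \<le> b" using mono_onD[OF mono, of 0 m] X0 Xm by simp
    fix u v assume uv: "a \<le> u" "u \<le> v" "v \<le> b"
    have "f v - f u = (\<Sum>j<m. f (clamp (X j) (X (Suc j)) v) - f (clamp (X j) (X (Suc j)) u))"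
      using sum_clamp_telescope[OF mono, of v f] sum_clamp_telescope[OF mono, of u f] uv X0 Xm
      by (simp add: sum_subtractf)
    then have "\<bar>f v - f u\<bar>
        \<le> (\<Sum>j<m. \<bar>f (clamp (X j) (X (Suc j)) v) - f (clamp (X j) (X (Suc j)) u)\<bar>)"
      by (simp add: sum_abs)
    also have "\<dots> = V v - V u"
      unfolding V_def sum_subtractf[symmetric]
      by (intro sum.cong refl abs_diff_monotone_split[OF pieces])
        (use step uv in \<open>auto simp: clamp_real\<close>)
    finally show "\<bar>f v - f u\<bar> \<le> V v - V u" .
  qed
  moreover have "V a = 0"
    using mono_onD[OF mono, of 0] step X0 by (auto simp: V_def clamp_real intro!: sum.neutral)
  moreover have "V b = (\<Sum>j<m. \<bar>f (X (Suc j)) - f (X j)\<bar>)"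
    using mono_onD[OF mono, of _ m] step Xm by (auto simp: V_def clamp_real intro!: sum.cong)
  ultimately show ?thesis by simp
qed

lemma sum_abs_diff_alternating:
  fixes p :: "nat \<Rightarrow> real"
  assumes "s = 1 \<or> s = -1" "0 < n" and alt: "\<And>k. k < n \<Longrightarrow> 0 \<le> s * (-1)^k * (p (Suc k) - p k)"
  shows "(\<Sum>k<n. \<bar>p (Suc k) - p k\<bar>)
    = s * (-1)^(n-1) * p n - s * p 0 + 2 * (\<Sum>k=1..<n. s * (-1)^(k-1) * p k)"
proof -
  have abs_eq: "\<bar>p (Suc k) - p k\<bar> = s * (-1)^k * (p (Suc k) - p k)" if "k < n" for k
    using alt[OF that] assms(1) by (cases "even k") auto
  from \<open>0 < n\<close> abs_eq show ?thesis
  proof (induction n rule: nat_induct_non_zero)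
    case (Suc n)
    have "(-1::real)^n = - ((-1)^(n-1))" using \<open>0 < n\<close> by (cases n) auto
    moreover have "(\<Sum>k=1..<Suc n. s * (-1)^(k-1) * p k)
        = (\<Sum>k=1..<n. s * (-1)^(k-1) * p k) + s * (-1)^(n-1) * p n"
      using \<open>0 < n\<close> by simp
    ultimately show ?case
      using Suc.IH Suc.prems[of n] Suc.prems by (simp add: ring_distribs)
  qed (simp add: right_diff_distrib)
qed

lemma poly_roots_isolated:
  fixes p :: "real poly" and a b :: "nat \<Rightarrow> real"
  assumes "0 < n" and deg: "degree p \<le> n"
    and ab: "\<And>i. i \<in> {1..n} \<Longrightarrow> a i < b i"
    and ba: "\<And>i. i \<in> {1..<n} \<Longrightarrow> b i < a (Suc i)"
    and sign_change: "\<And>i. i \<in> {1..n} \<Longrightarrow> poly p (a i) * poly p (b i) < 0"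
  obtains r where "strict_mono_on {1..n} r" "\<And>i. i \<in> {1..n} \<Longrightarrow> a i < r i \<and> r i < b i"
    "{x. poly p x = 0} = r ` {1..n}"
proof -
  have "\<exists>r. a i < r \<and> r < b i \<and> poly p r = 0" if i: "i \<in> {1..n}" for i
  proof -
    have "a i \<le> b i" using ab[OF i] by simp
    from sign_change[OF i] consider "poly p (a i) < 0" "0 < poly p (b i)"
      | "0 < poly p (a i)" "poly p (b i) < 0" by (auto simp: mult_less_0_iff)
    then obtain r where "a i \<le> r" "r \<le> b i" "poly p r = 0"
      by cases
        (use IVT[of "poly p" "a i" 0 "b i"] IVT2[of "poly p" "b i" 0 "a i"] \<open>a i \<le> b i\<close> in auto)
    moreover from this sign_change[OF i] have "r \<noteq> a i" "r \<noteq> b i" by auto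
    ultimately show ?thesis by (intro exI[of _ r]) auto
  qed
  then obtain r where r: "\<And>i. i \<in> {1..n} \<Longrightarrow> a i < r i \<and> r i < b i \<and> poly p (r i) = 0"
    by metis
  have mono: "strict_mono_on {1..n} r"
  proof (rule strict_mono_onI)
    fix i j assume "i \<in> {1..n}" "j \<in> {1..n}" "i < j"
    then have "Suc i \<le> j" "j \<le> n" by auto
    then show "r i < r j"
    proof (induction j rule: dec_induct)
      case base then show ?case using r[of i] r[of "Suc i"] ba[of i] \<open>i \<in> {1..n}\<close> by force
    next
      case (step m)
      then show ?case using r[of m] r[of "Suc m"] ba[of m] \<open>i \<in> {1..n}\<close> by force
    qed
  qed
  have "p \<noteq> 0" using sign_change[of n] \<open>0 < n\<close> by auto
  have sub: "r ` {1..n} \<subseteq> {x. poly p x = 0}" using r by auto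
  have "card (r ` {1..n}) = n" using card_image[OF strict_mono_on_imp_inj_on[OF mono]] by simp
  moreover have "card {x. poly p x = 0} \<le> n" using card_poly_roots_bound[OF \<open>p \<noteq> 0\<close>] deg by simp
  ultimately have "r ` {1..n} = {x. poly p x = 0}"
    using card_seteq[OF poly_roots_finite[OF \<open>p \<noteq> 0\<close>] sub] by simp
  then show thesis using that mono r by auto
qed

lemma mono_on_if_deriv_nonvanishing:
  fixes f f' :: "real \<Rightarrow> real"
  assumes deriv: "\<And>x. (f has_real_derivative f' x) (at x)" and cont: "\<And>x. isCont f' x"
    and nonzero: "\<And>x. u < x \<Longrightarrow> x < v \<Longrightarrow> f' x \<noteq> 0"
    and w: "u < w" "w < v" "0 < f' w"
  shows "mono_on {u..v} f"
proof -
  have pos: "0 < f' x" if x: "u < x" "x < v" for x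
  proof (rule ccontr)
    assume "\<not> 0 < f' x"
    then have "f' x < 0" using nonzero[OF x] by simp
    then obtain z where "min x w \<le> z" "z \<le> max x w" "f' z = 0"
      using IVT[of f' x 0 w] IVT2[of f' x 0 w] w cont
      by (cases "x \<le> w") (auto simp: min_def max_def)
    then show False using nonzero[of z] x w by (simp add: min_def max_def split: if_splits)
  qed
  show ?thesis
  proof (rule mono_onI)
    fix x y assume "x \<in> {u..v}" "y \<in> {u..v}" "x \<le> y"
    from \<open>x \<le> y\<close> show "f x \<le> f y"
    proof (rule DERIV_nonneg_imp_increasing_open[of x y f])
      fix z assume "x < z" "z < y"
      then show "\<exists>d. (f has_real_derivative d) (at z) \<and> 0 \<le> d"
        using pos[of z] deriv[of z] \<open>x \<in> {u..v}\<close> \<open>y \<in> {u..v}\<close> by (intro exI[of _ "f' z"]) auto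
    qed (use DERIV_isCont[OF deriv] in \<open>auto intro!: continuous_at_imp_continuous_on\<close>)
  qed
qed

lemma abs_poly_le_sum_abs_coeffs:
  fixes p :: "real poly"
  assumes "degree p \<le> n" "\<bar>x\<bar> \<le> 1"
  shows "\<bar>poly p x\<bar> \<le> (\<Sum>i\<le>n. \<bar>coeff p i\<bar>)"
proof -
  have "poly p x = (\<Sum>i\<le>n. coeff p i * x ^ i)"
    by (subst poly_as_sum_of_monoms'[OF assms(1), symmetric]) (simp add: poly_sum poly_monom)
  then have "\<bar>poly p x\<bar> \<le> (\<Sum>i\<le>n. \<bar>coeff p i * x ^ i\<bar>)"
    by (simp add: sum_abs)
  also have "\<dots> \<le> (\<Sum>i\<le>n. \<bar>coeff p i\<bar>)"
    using assms(2) by (intro sum_mono) (simp add: abs_mult power_abs mult_left_le power_le_one)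
  finally show ?thesis .
qed

lemma local_max_point_compose:
  fixes f g :: "real \<Rightarrow> real"
  assumes "isCont g x0" "\<alpha> < g x0" "g x0 < \<beta>"
    and le: "\<And>x. \<alpha> < g x \<Longrightarrow> g x < \<beta> \<Longrightarrow> f (g x) \<le> f (g x0)"
  shows "local_max_point (\<lambda>x. f (g x)) x0"
proof -
  obtain d where "d > 0" and d: "\<And>x. dist x x0 < d \<Longrightarrow> dist (g x) (g x0) < min (g x0 - \<alpha>) (\<beta> - g x0)"
    using assms(1-3) unfolding continuous_at_eps_delta by (metis diff_gt_0_iff_gt min_def)
  have "f (g x) \<le> f (g x0)" if "\<bar>x - x0\<bar> < d" for x
    using d[of x] that by (intro le) (auto simp: dist_real_def)
  then show ?thesis unfolding local_max_point_def using \<open>d > 0\<close> by blast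
qed

lemma local_max_point_deriv_zero:
  assumes "local_max_point f x" "(f has_real_derivative D) (at x)"
  shows "D = 0"
proof -
  obtain e where "e > 0" "\<And>y. \<bar>y - x\<bar> < e \<Longrightarrow> f y \<le> f x"
    using assms(1) unfolding local_max_point_def by blast
  then show ?thesis using DERIV_local_max[OF assms(2), of e] by (simp add: abs_minus_commute)
qed

section \<open>Angles measured in turns\<close>

definition arccos_turns :: "real \<Rightarrow> real" where
  "arccos_turns c = arccos c / (2*pi)"

lemma cos_arccos_turns: "-1 \<le> c \<Longrightarrow> c \<le> 1 \<Longrightarrow> cos (2*pi*arccos_turns c) = c"
  by (simp add: arccos_turns_def)

lemma arccos_turns_bounds: "-1 \<le> c \<Longrightarrow> c \<le> 1 \<Longrightarrow> 0 \<le> arccos_turns c \<and> arccos_turns c \<le> 1/2"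
  using arccos_bounded[of c] by (simp add: arccos_turns_def field_simps)

lemma arccos_turns_1 [simp]: "arccos_turns 1 = 0"
  and arccos_turns_minus_1 [simp]: "arccos_turns (-1) = 1/2"
  by (simp_all add: arccos_turns_def)

lemma arccos_turns_less: "-1 \<le> c \<Longrightarrow> c < c' \<Longrightarrow> c' \<le> 1 \<Longrightarrow> arccos_turns c' < arccos_turns c"
  using arccos_less_mono[of c' c] by (simp add: arccos_turns_def divide_strict_right_mono)

lemma arccos_turns_cos: "0 \<le> x \<Longrightarrow> x \<le> 1/2 \<Longrightarrow> arccos_turns (cos (2*pi*x)) = x"
  by (simp add: arccos_turns_def arccos_cos)

lemma cos_turns_reflect: "cos (2*pi*(1 - x)) = cos (2*pi*x)"
  by (simp add: right_diff_distrib cos_diff)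

lemma cos_turns_eq_cases:
  assumes "0 \<le> x" "x < 1"
  shows "x = arccos_turns (cos (2*pi*x)) \<or> x = 1 - arccos_turns (cos (2*pi*x))"
proof (cases "x \<le> 1/2")
  case False
  then have "arccos_turns (cos (2*pi*(1 - x))) = 1 - x" using assms by (intro arccos_turns_cos) auto
  then show ?thesis by (simp add: cos_turns_reflect)
qed (use assms arccos_turns_cos in auto)

lemma antimono_on_cos_turns: "antimono_on {0..1/2} (\<lambda>x. cos (2*pi*x))"
  by (rule monotone_onI) (auto intro!: cos_monotone_0_pi_le)

lemma mono_on_cos_turns: "mono_on {1/2..1} (\<lambda>x. cos (2*pi*x))"
proof (rule mono_onI)
  fix x y :: real assume "x \<in> {1/2..1}" "y \<in> {1/2..1}" "x \<le> y"
  then have "cos (2*pi*(1 - x)) \<le> cos (2*pi*(1 - y))"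
    using monotone_onD[OF antimono_on_cos_turns, of "1 - y" "1 - x"] by auto
  then show "cos (2*pi*x) \<le> cos (2*pi*y)" by (simp add: cos_turns_reflect)
qed

section \<open>The polynomial behind \<open>Gpm\<close>\<close>

text \<open>The bracketed terms are the Chebyshev polynomials \<open>T\<^sub>6\<close> and \<open>T\<^sub>7\<close>.\<close>
definition Ppm :: "real \<Rightarrow> real \<Rightarrow> real" where
  "Ppm s c = 3 + 2 * (c + s * (32*c^6 - 48*c^4 + 18*c^2 - 1)
                         + s * (64*c^7 - 112*c^5 + 56*c^3 - 7*c))"

definition dPpm :: "real \<Rightarrow> real poly" where
  "dPpm s = [:2 - 14 * s, 72 * s, 336 * s, -384 * s, -1120 * s, 384 * s, 896 * s:]"

lemma cos_times_6_7:
  fixes a :: real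
  shows "cos (6*a) = 32*cos a^6 - 48*cos a^4 + 18*cos a^2 - 1"
    and "cos (7*a) = 64*cos a^7 - 112*cos a^5 + 56*cos a^3 - 7*cos a"
proof -
  have rec: "cos ((n + 1) * a) = 2 * cos a * cos (n * a) - cos ((n - 1) * a)" for n :: real
    using cos_add[of "n*a" a] cos_diff[of "n*a" a] by (simp add: algebra_simps)
  define c where "c = cos a"
  have 2: "cos (2*a) = 2*c^2 - 1" by (simp add: c_def cos_double_cos)
  have "cos (3*a) = 2*c*cos (2*a) - c" using rec[of 2] by (simp add: c_def)
  then have 3: "cos (3*a) = 4*c^3 - 3*c" unfolding 2 by (simp add: algebra_simps eval_nat_numeral)
  have "cos (4*a) = 2*c*cos (3*a) - cos (2*a)" using rec[of 3] by (simp add: c_def)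
  then have 4: "cos (4*a) = 8*c^4 - 8*c^2 + 1" unfolding 3 2
    by (simp add: algebra_simps eval_nat_numeral)
  have "cos (5*a) = 2*c*cos (4*a) - cos (3*a)" using rec[of 4] by (simp add: c_def)
  then have 5: "cos (5*a) = 16*c^5 - 20*c^3 + 5*c" unfolding 4 3
    by (simp add: algebra_simps eval_nat_numeral)
  have "cos (6*a) = 2*c*cos (5*a) - cos (4*a)" using rec[of 5] by (simp add: c_def)
  then have 6: "cos (6*a) = 32*c^6 - 48*c^4 + 18*c^2 - 1" unfolding 5 4
    by (simp add: algebra_simps eval_nat_numeral)
  have "cos (7*a) = 2*c*cos (6*a) - cos (5*a)" using rec[of 6] by (simp add: c_def)
  then have 7: "cos (7*a) = 64*c^7 - 112*c^5 + 56*c^3 - 7*c" unfolding 6 5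
    by (simp add: algebra_simps eval_nat_numeral)
  from 6 7 show "cos (6*a) = 32*cos a^6 - 48*cos a^4 + 18*cos a^2 - 1"
    "cos (7*a) = 64*cos a^7 - 112*cos a^5 + 56*cos a^3 - 7*cos a" by (simp_all add: c_def)
qed

lemma Gpm_eq_Ppm_cos: "Gpm s x = Ppm s (cos (2*pi*x))"
  using cos_times_6_7[of "2*pi*x"]
  by (simp add: Gpm_def Ppm_def mult.assoc[symmetric])

text \<open>That is, \<open>Gpm s x = \<bar>1 + exp (i a) + s exp (7 i a)\<bar>\<^sup>2\<close> with \<open>a = 2*pi*x\<close>.\<close>
lemma Gpm_sum_of_squares:
  assumes "s = 1 \<or> s = -1"
  shows "Gpm s x = (1 + cos (2*pi*x) + s * cos (14*pi*x))^2 + (sin (2*pi*x) + s * sin (14*pi*x))^2"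
proof -
  have "12*pi*x = 14*pi*x - 2*pi*x" by simp
  then have e: "cos (12*pi*x) = cos (14*pi*x) * cos (2*pi*x) + sin (14*pi*x) * sin (2*pi*x)"
    by (simp only: cos_diff)
  have "s * s = 1" using assms by auto
  then show ?thesis
    unfolding Gpm_def e power2_eq_square
    using sin_cos_squared_add3[of "2*pi*x"] sin_cos_squared_add3[of "14*pi*x"] by algebra
qed

lemma Gpm_nonneg: "s = 1 \<or> s = -1 \<Longrightarrow> 0 \<le> Gpm s x"
  by (simp add: Gpm_sum_of_squares)

lemma Ppm_nonneg: "s = 1 \<or> s = -1 \<Longrightarrow> -1 \<le> c \<Longrightarrow> c \<le> 1 \<Longrightarrow> 0 \<le> Ppm s c"
  using Gpm_nonneg[of s "arccos_turns c"] by (simp add: Gpm_eq_Ppm_cos cos_arccos_turns)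

lemma Ppm_has_derivative: "(Ppm s has_real_derivative poly (dPpm s) c) (at c)"
  unfolding Ppm_def dPpm_def
  by (auto intro!: derivative_eq_intros simp: algebra_simps eval_nat_numeral)

lemma degree_dPpm: "degree (dPpm s) \<le> 6"
  unfolding dPpm_def by (rule order.trans[OF degree_pCons_le], simp)+

lemma dPpm_le:
  assumes "s = 1 \<or> s = -1" "\<bar>c\<bar> \<le> 1"
  shows "poly (dPpm s) c \<le> 3208"
proof -
  have "(\<Sum>i\<le>6. \<bar>coeff (dPpm s) i\<bar>) \<le> 3208"
    using assms(1) by (auto simp: dPpm_def numeral_eq_Suc)
  then show ?thesis
    using abs_poly_le_sum_abs_coeffs[OF degree_dPpm[of s] assms(2)] by linarith
qed

lemma Ppm_lipschitz:
  assumes "s = 1 \<or> s = -1" "-1 \<le> u" "u \<le> v" "v \<le> 1"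
  shows "Ppm s v \<le> Ppm s u + 3208 * (v - u)"
proof -
  have "3208 * u - Ppm s u \<le> 3208 * v - Ppm s v"
  proof (rule DERIV_nonneg_imp_increasing_open[OF \<open>u \<le> v\<close>])
    fix c assume "u < c" "c < v"
    then show "\<exists>d. ((\<lambda>c. 3208 * c - Ppm s c) has_real_derivative d) (at c) \<and> 0 \<le> d"
      using dPpm_le[OF assms(1), of c] assms
      by (intro exI[of _ "3208 - poly (dPpm s) c"])
        (auto intro!: derivative_eq_intros Ppm_has_derivative)
  qed (auto simp: Ppm_def intro!: continuous_intros)
  then show ?thesis by simp
qed

lemma cos_local_max_Gpm:
  assumes "local_max_point (Gpm s) x"
  shows "cos (2*pi*x) \<in> {-1, 1} \<or> poly (dPpm s) (cos (2*pi*x)) = 0"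
proof -
  have "(Gpm s has_real_derivative poly (dPpm s) (cos (2*pi*x)) * (- sin (2*pi*x) * (2*pi))) (at x)"
    unfolding Gpm_eq_Ppm_cos[abs_def]
    by (rule DERIV_chain2[OF Ppm_has_derivative]) (auto intro!: derivative_eq_intros)
  then have "poly (dPpm s) (cos (2*pi*x)) * (- sin (2*pi*x) * (2*pi)) = 0"
    by (rule local_max_point_deriv_zero[OF assms])
  then have "poly (dPpm s) (cos (2*pi*x)) = 0 \<or> sin (2*pi*x) = 0" by simp
  moreover have "sin (2*pi*x) = 0 \<Longrightarrow> cos (2*pi*x) \<in> {-1, 1}"
    using sin_cos_squared_add[of "2*pi*x"] by (auto simp: power2_eq_1_iff)
  ultimately show ?thesis by blast
qed

section \<open>Consequences of the alternating monotonicity of \<open>Ppm\<close>\<close>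

definition cos_turns_partition :: "(nat \<Rightarrow> real) \<Rightarrow> nat \<Rightarrow> real" where
  "cos_turns_partition q j =
     (if j \<le> 7 then arccos_turns (q (7 - j)) else 1 - arccos_turns (q (j - 7)))"

definition interior_peaks :: "real \<Rightarrow> nat set" where
  "interior_peaks s = {k \<in> {1..6}. s * (-1)^(k-1) = 1}"

locale Ppm_zigzag =
  fixes s :: real and q :: "nat \<Rightarrow> real"
  assumes sign: "s = 1 \<or> s = -1"
    and q_0: "q 0 = -1" and q_7: "q 7 = 1"
    and q_strict_mono: "strict_mono_on {..7} q"
    and critical_points: "{c. poly (dPpm s) c = 0} = q ` {1..6}"
    and Ppm_monotone: "\<And>k. k < 7 \<Longrightarrow> mono_on {q k..q (Suc k)} (\<lambda>c. s * (-1)^k * Ppm s c)"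
begin

lemma q_le: "i \<le> j \<Longrightarrow> j \<le> 7 \<Longrightarrow> q i \<le> q j"
  using strict_mono_on_leD[OF q_strict_mono] by simp

lemma q_less: "i < j \<Longrightarrow> j \<le> 7 \<Longrightarrow> q i < q j"
  using strict_mono_onD[OF q_strict_mono] by simp

lemma q_bounds: "k \<le> 7 \<Longrightarrow> -1 \<le> q k \<and> q k \<le> 1"
  using q_le[of 0 k] q_le[of k 7] q_0 q_7 by simp

lemma q_interior_bounds: "k \<in> {1..6} \<Longrightarrow> -1 < q k \<and> q k < 1"
  using q_less[of 0 k] q_less[of k 7] q_0 q_7 by auto

lemma Ppm_q_nonneg: "k \<le> 7 \<Longrightarrow> 0 \<le> Ppm s (q k)"
  using Ppm_nonneg[OF sign] q_bounds by simp

lemma Ppm_increasing: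
  assumes "k < 7" "s * (-1)^k = 1" "q k \<le> c" "c \<le> d" "d \<le> q (Suc k)"
  shows "Ppm s c \<le> Ppm s d"
  using mono_onD[OF Ppm_monotone[OF assms(1)], of c d] assms(2-) by simp

lemma Ppm_decreasing:
  assumes "k < 7" "s * (-1)^k = -1" "q k \<le> c" "c \<le> d" "d \<le> q (Suc k)"
  shows "Ppm s d \<le> Ppm s c"
  using mono_onD[OF Ppm_monotone[OF assms(1)], of c d] assms(2-) by simp

lemma sign_alternative: "s * (-1)^k = 1 \<or> s * (-1)^k = -1"
  using sign by (cases "even k") auto

lemma Ppm_monotonic:
  "k < 7 \<Longrightarrow> mono_on {q k..q (Suc k)} (Ppm s) \<or> antimono_on {q k..q (Suc k)} (Ppm s)"
  using sign_alternative[of k] Ppm_increasing[of k] Ppm_decreasing[of k]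
  by (auto intro!: monotone_onI)

abbreviation X where "X \<equiv> cos_turns_partition q"

lemma X_upper: "7 \<le> j \<Longrightarrow> X j = 1 - arccos_turns (q (j - 7))"
  by (cases "j = 7") (auto simp: cos_turns_partition_def q_0)

lemma X_0: "X 0 = 0" and X_14: "X 14 = 1"
  by (simp_all add: cos_turns_partition_def q_7 q_0)

lemma cos_X: "j \<le> 14 \<Longrightarrow> cos (2*pi*X j) = q (if j \<le> 7 then 7 - j else j - 7)"
  using cos_arccos_turns q_bounds X_upper[of j] cos_turns_reflect
  by (auto simp: cos_turns_partition_def)

lemma cos_turns_on_X_piece:
  assumes "j < 14"
  obtains k where "k < 7"
    "mono_on {X j..X (Suc j)} (\<lambda>x. cos (2*pi*x)) \<or> antimono_on {X j..X (Suc j)} (\<lambda>x. cos (2*pi*x))"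
    "(\<lambda>x. cos (2*pi*x)) ` {X j..X (Suc j)} \<subseteq> {q k..q (Suc k)}"
proof (cases "j < 7")
  case True
  define k where "k = 6 - j"
  have "Suc k = 7 - j" using True by (simp add: k_def)
  then have k: "k < 7" "X j = arccos_turns (q (Suc k))" "X (Suc j) = arccos_turns (q k)"
    using True by (auto simp: k_def cos_turns_partition_def)
  have "0 \<le> arccos_turns (q (Suc k))" "arccos_turns (q k) \<le> 1/2"
    using arccos_turns_bounds q_bounds k(1) by (simp_all add: Suc_leI)
  then have I: "{X j..X (Suc j)} \<subseteq> {0..1/2}" using k by auto
  have anti: "antimono_on {X j..X (Suc j)} (\<lambda>x. cos (2*pi*x))"
    by (rule monotone_on_subset[OF antimono_on_cos_turns I])
  have "(\<lambda>x. cos (2*pi*x)) ` {X j..X (Suc j)} \<subseteq> {q k..q (Suc k)}"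
  proof
    fix y assume "y \<in> (\<lambda>x. cos (2*pi*x)) ` {X j..X (Suc j)}"
    then obtain x where x: "x \<in> {X j..X (Suc j)}" "y = cos (2*pi*x)" by blast
    then have "X j \<le> X (Suc j)" by simp
    then show "y \<in> {q k..q (Suc k)}"
      using monotone_onD[OF anti, of x "X (Suc j)"] monotone_onD[OF anti, of "X j" x] x k
        cos_arccos_turns q_bounds[of k] q_bounds[of "Suc k"] by auto
  qed
  then show thesis using that k anti by blast
next
  case False
  define k where "k = j - 7"
  have "Suc j - 7 = Suc k" using False by (simp add: k_def)
  then have k: "k < 7" "X j = 1 - arccos_turns (q k)" "X (Suc j) = 1 - arccos_turns (q (Suc k))"
    using False assms X_upper[of j] X_upper[of "Suc j"] by (auto simp: k_def)
  have "arccos_turns (q k) \<le> 1/2" "0 \<le> arccos_turns (q (Suc k))"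
    using arccos_turns_bounds q_bounds k(1) by (simp_all add: Suc_leI)
  then have I: "{X j..X (Suc j)} \<subseteq> {1/2..1}" using k by auto
  have mono: "mono_on {X j..X (Suc j)} (\<lambda>x. cos (2*pi*x))"
    by (rule monotone_on_subset[OF mono_on_cos_turns I])
  have "(\<lambda>x. cos (2*pi*x)) ` {X j..X (Suc j)} \<subseteq> {q k..q (Suc k)}"
  proof
    fix y assume "y \<in> (\<lambda>x. cos (2*pi*x)) ` {X j..X (Suc j)}"
    then obtain x where x: "x \<in> {X j..X (Suc j)}" "y = cos (2*pi*x)" by blast
    then have "X j \<le> X (Suc j)" by simp
    then show "y \<in> {q k..q (Suc k)}"
      using mono_onD[OF mono, of x "X (Suc j)"] mono_onD[OF mono, of "X j" x] x k
        cos_arccos_turns q_bounds[of k] q_bounds[of "Suc k"] cos_turns_reflect by auto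
  qed
  then show thesis using that k mono by blast
qed

lemma X_less_Suc: "j < 14 \<Longrightarrow> X j < X (Suc j)"
proof (cases "j < 7")
  case True
  then have "q (6 - j) < q (7 - j)" by (intro q_less) auto
  then show ?thesis
    using True arccos_turns_less q_bounds[of "6 - j"] q_bounds[of "7 - j"]
    by (simp add: cos_turns_partition_def)
next
  case False
  assume "j < 14"
  then have "q (j - 7) < q (Suc j - 7)" using False by (intro q_less) auto
  then show ?thesis
    using False \<open>j < 14\<close> X_upper[of j] X_upper[of "Suc j"] arccos_turns_less
      q_bounds[of "j - 7"] q_bounds[of "Suc j - 7"] by simp
qed

lemma Gpm_powr_monotonic_on_X_piece:
  assumes "0 \<le> t" "j < 14"
  shows "mono_on {X j..X (Suc j)} (\<lambda>x. Gpm s x powr t) \<or>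
    antimono_on {X j..X (Suc j)} (\<lambda>x. Gpm s x powr t)"
proof -
  obtain k where k: "k < 7"
    "mono_on {X j..X (Suc j)} (\<lambda>x. cos (2*pi*x)) \<or> antimono_on {X j..X (Suc j)} (\<lambda>x. cos (2*pi*x))"
    "(\<lambda>x. cos (2*pi*x)) ` {X j..X (Suc j)} \<subseteq> {q k..q (Suc k)}"
    using cos_turns_on_X_piece[OF assms(2)] by blast
  have Ppm_cos: "mono_on {X j..X (Suc j)} (Ppm s \<circ> (\<lambda>x. cos (2*pi*x))) \<or>
      antimono_on {X j..X (Suc j)} (Ppm s \<circ> (\<lambda>x. cos (2*pi*x)))"
    by (rule monotonic_on_compose[OF Ppm_monotonic[OF k(1)] k(2,3)])
  have "mono_on {0..} (\<lambda>y::real. y powr t)"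
    using \<open>0 \<le> t\<close> by (auto intro!: mono_onI powr_mono2)
  moreover have "(Ppm s \<circ> (\<lambda>x. cos (2*pi*x))) ` {X j..X (Suc j)} \<subseteq> {0..}"
    using Gpm_nonneg[OF sign] by (auto simp: Gpm_eq_Ppm_cos)
  ultimately have "mono_on {X j..X (Suc j)} ((\<lambda>y. y powr t) \<circ> (Ppm s \<circ> (\<lambda>x. cos (2*pi*x)))) \<or>
      antimono_on {X j..X (Suc j)} ((\<lambda>y. y powr t) \<circ> (Ppm s \<circ> (\<lambda>x. cos (2*pi*x))))"
    by (intro monotonic_on_compose[OF _ Ppm_cos]) auto
  then show ?thesis by (simp add: comp_def Gpm_eq_Ppm_cos)
qed

lemma period_variation_Gpm_powr_le:
  assumes "0 \<le> t"
  shows "period_variation (\<lambda>x. Gpm s x powr t)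
    \<le> 2 * (\<Sum>k<7. \<bar>Ppm s (q (Suc k)) powr t - Ppm s (q k) powr t\<bar>)"
proof -
  have "period_variation (\<lambda>x. Gpm s x powr t)
      \<le> (\<Sum>j<14. \<bar>Gpm s (X (Suc j)) powr t - Gpm s (X j) powr t\<bar>)"
    unfolding period_variation_def
  proof (rule total_variation_piecewise_monotone)
    show "mono_on {..14} X" by (rule mono_on_atMost_SucI) (simp add: X_less_Suc less_imp_le)
  qed (simp_all add: X_0 X_14 Gpm_powr_monotonic_on_X_piece[OF assms])
  also have "\<dots> = 2 * (\<Sum>k<7. \<bar>Ppm s (q (Suc k)) powr t - Ppm s (q k) powr t\<bar>)"
    using cos_X by (simp add: Gpm_eq_Ppm_cos numeral_eq_Suc abs_minus_commute)
  finally show ?thesis .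
qed

lemma Ppm_minus_sign: "Ppm s (-s) = 1"
  using sign by (auto simp: Ppm_def)

lemma period_variation_Gpm_powr_le_peaks:
  assumes "0 \<le> t"
  shows "period_variation (\<lambda>x. Gpm s x powr t)
    \<le> 2 * (Ppm s s powr t - 1 + 2 * (\<Sum>k\<in>interior_peaks s. Ppm s (q k) powr t))"
proof -
  define p where "p k = Ppm s (q k) powr t" for k
  have p_nonneg: "0 \<le> p k" for k by (simp add: p_def)
  have p_mono: "p k \<le> p l" if "k \<le> 7" "Ppm s (q k) \<le> Ppm s (q l)" for k l
    unfolding p_def using that Ppm_q_nonneg assms by (intro powr_mono2) auto
  have alternating: "0 \<le> s * (-1)^k * (p (Suc k) - p k)" if "k < 7" for k
    using sign_alternative[of k] that p_mono[of k "Suc k"] p_mono[of "Suc k" k]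
      Ppm_increasing[of k "q k" "q (Suc k)"] Ppm_decreasing[of k "q k" "q (Suc k)"]
      q_le[of k "Suc k"]
    by auto
  have ends: "s * p 7 - s * p 0 = Ppm s s powr t - 1"
    using sign Ppm_minus_sign by (auto simp: p_def q_0 q_7)
  have "(\<Sum>k=1..<7. s * (-1)^(k-1) * p k) \<le> (\<Sum>k=1..<7. if s * (-1)^(k-1) = 1 then p k else 0)"
  proof (rule sum_mono)
    fix k show "s * (-1)^(k-1) * p k \<le> (if s * (-1)^(k-1) = 1 then p k else 0)"
      using sign_alternative[of "k-1"] p_nonneg[of k] by auto
  qed
  also have "\<dots> = (\<Sum>k\<in>{k\<in>{1..<7}. s * (-1)^(k-1) = 1}. p k)"
    by (rule sum.inter_filter[symmetric]) simp
  also have "{k\<in>{1..<7}. s * (-1)^(k-1) = 1} = interior_peaks s"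
    by (auto simp: interior_peaks_def)
  finally have "(\<Sum>k<7. \<bar>p (Suc k) - p k\<bar>)
      \<le> Ppm s s powr t - 1 + 2 * (\<Sum>k\<in>interior_peaks s. p k)"
    using sum_abs_diff_alternating[OF sign _ alternating, of 7] ends by simp
  then show ?thesis using period_variation_Gpm_powr_le[OF assms] by (simp add: p_def)
qed

lemma Gpm_eq_Ppm_cos_fun: "Gpm s = (\<lambda>x. Ppm s (cos (2*pi*x)))"
  by (simp add: fun_eq_iff Gpm_eq_Ppm_cos)

lemma local_max_at_interior_peak:
  assumes "k \<in> interior_peaks s"
  shows "local_max_point (Gpm s) (arccos_turns (q k)) \<and>
    local_max_point (Gpm s) (1 - arccos_turns (q k))"
proof -
  have k: "1 \<le> k" "k \<le> 6" "s * (-1)^(k-1) = 1" using assms by (auto simp: interior_peaks_def)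
  then have "s * (-1)^k = -1" by (cases k) auto
  then have le: "Ppm s c \<le> Ppm s (q k)" if "q (k-1) \<le> c" "c \<le> q (k+1)" for c
    using Ppm_increasing[of "k-1" c "q k"] Ppm_decreasing[of k "q k" c] k that
    by (cases "c \<le> q k") auto
  have "q (k-1) < q k" "q k < q (k+1)" using k by (auto intro: q_less)
  moreover have "cos (2*pi*arccos_turns (q k)) = q k" "cos (2*pi*(1 - arccos_turns (q k))) = q k"
    using cos_arccos_turns q_bounds k by (simp_all add: cos_turns_reflect)
  ultimately show ?thesis
    unfolding Gpm_eq_Ppm_cos_fun using le
    by (auto intro!: local_max_point_compose[where f = "Ppm s" and g = "\<lambda>x. cos (2*pi*x)"
          and \<alpha> = "q (k-1)" and \<beta> = "q (k+1)"])
qed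

lemma local_max_at_end_peak: "local_max_point (Gpm s) (arccos_turns s)"
proof -
  have x0: "cos (2*pi*arccos_turns s) = s" using sign cos_arccos_turns by auto
  consider (plus) "s = 1" | (minus) "s = -1" using sign by blast
  then obtain \<alpha> \<beta> where "\<alpha> < s" "s < \<beta>"
    and "\<And>c. \<alpha> < c \<Longrightarrow> c < \<beta> \<Longrightarrow> c \<in> {-1..1} \<Longrightarrow> Ppm s c \<le> Ppm s s"
  proof cases
    case plus
    have "Ppm s c \<le> Ppm s s" if "q 6 < c" "c \<in> {-1..1}" for c
      using Ppm_increasing[of 6 c 1] that plus q_7 by (simp add: numeral_eq_Suc)
    moreover have "q 6 < s" using q_less[of 6 7] q_7 plus by simp
    ultimately show thesis using that[of "q 6" 2] plus by simp
  next
    case minus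
    have "Ppm s c \<le> Ppm s s" if "c < q 1" "c \<in> {-1..1}" for c
      using Ppm_decreasing[of 0 "-1" c] that minus q_0 by simp
    moreover have "s < q 1" using q_less[of 0 1] q_0 minus by simp
    ultimately show thesis using that[of "-2" "q 1"] minus by simp
  qed
  then show ?thesis
    unfolding Gpm_eq_Ppm_cos_fun using x0
    by (intro local_max_point_compose[where f = "Ppm s" and g = "\<lambda>x. cos (2*pi*x)"]) auto
qed

abbreviation max_points where "max_points \<equiv> {x \<in> {0..<1}. local_max_point (Gpm s) x}"

lemma finite_max_points: "finite max_points"
proof (rule finite_subset)
  show "max_points \<subseteq> arccos_turns ` q ` {..7} \<union> (\<lambda>c. 1 - arccos_turns c) ` q ` {..7}"
  proof
    fix x assume x: "x \<in> max_points"
    have "q ` {1..6} \<subseteq> q ` {..7}" "-1 \<in> q ` {..7}" "1 \<in> q ` {..7}"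
      using q_0 q_7 by (auto intro: rev_image_eqI)
    moreover have "cos (2*pi*x) \<in> {-1, 1} \<or> cos (2*pi*x) \<in> q ` {1..6}"
      using cos_local_max_Gpm[of s x] x critical_points by auto
    ultimately have "cos (2*pi*x) \<in> q ` {..7}" by auto
    then show "x \<in> arccos_turns ` q ` {..7} \<union> (\<lambda>c. 1 - arccos_turns c) ` q ` {..7}"
      using cos_turns_eq_cases[of x] x by auto
  qed
qed simp

lemma arccos_turns_q_interior:
  "k \<in> {1..6} \<Longrightarrow> 0 < arccos_turns (q k) \<and> arccos_turns (q k) < 1/2"
  using q_interior_bounds[of k] arccos_turns_less[of "q k" 1] arccos_turns_less[of "-1" "q k"]
  by auto

lemma inj_on_arccos_turns_q: "inj_on (\<lambda>k. arccos_turns (q k)) {1..6}"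
proof (rule inj_onI)
  fix i j :: nat assume ij: "i \<in> {1..6}" "j \<in> {1..6}" "arccos_turns (q i) = arccos_turns (q j)"
  have "q i = cos (2*pi*arccos_turns (q i))" using cos_arccos_turns q_bounds[of i] ij(1) by simp
  also have "\<dots> = q j" using ij(2,3) cos_arccos_turns q_bounds[of j] by simp
  finally have "q i = q j" .
  then show "i = j" using strict_mono_on_eqD[OF q_strict_mono, of i j] ij by simp
qed

lemma sum_max_points_ge:
  "Ppm s s powr t + 2 * (\<Sum>k\<in>interior_peaks s. Ppm s (q k) powr t)
    \<le> (\<Sum>x\<in>max_points. Gpm s x powr t)"
proof -
  define K where "K = interior_peaks s"
  define A where "A = (\<lambda>k. arccos_turns (q k)) ` K"
  define B where "B = (\<lambda>k. 1 - arccos_turns (q k)) ` K"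
  have K: "K \<subseteq> {1..6}" by (auto simp: K_def interior_peaks_def)
  have A: "A \<subseteq> {0<..<1/2}" and B: "B \<subseteq> {1/2<..<1}"
    using arccos_turns_q_interior K by (auto simp: A_def B_def)
  have e: "arccos_turns s \<in> {0, 1/2}" using sign by auto
  have inj_A: "inj_on (\<lambda>k. arccos_turns (q k)) K"
    using inj_on_subset[OF inj_on_arccos_turns_q K] .
  have inj_B: "inj_on (\<lambda>k. 1 - arccos_turns (q k)) K" using inj_A by (auto simp: inj_on_def)
  have G_q: "Gpm s (arccos_turns (q k)) = Ppm s (q k)"
    "Gpm s (1 - arccos_turns (q k)) = Ppm s (q k)" if "k \<in> K" for k
    using that K cos_arccos_turns q_bounds[of k] by (auto simp: Gpm_eq_Ppm_cos cos_turns_reflect)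
  have "Gpm s (arccos_turns s) = Ppm s s" using sign cos_arccos_turns by (auto simp: Gpm_eq_Ppm_cos)
  moreover have "(\<Sum>x\<in>A. Gpm s x powr t) = (\<Sum>k\<in>K. Ppm s (q k) powr t)"
    unfolding A_def by (simp add: sum.reindex[OF inj_A] G_q)
  moreover have "(\<Sum>x\<in>B. Gpm s x powr t) = (\<Sum>k\<in>K. Ppm s (q k) powr t)"
    unfolding B_def by (simp add: sum.reindex[OF inj_B] G_q)
  moreover have "finite A" "finite B" using K by (auto simp: A_def B_def intro: finite_subset)
  moreover have "A \<inter> B = {}"
  proof (intro equalityI subsetI)
    fix x assume "x \<in> A \<inter> B"
    then have "x < 1/2" "1/2 < x" using A B by auto
    then show "x \<in> {}" by simp
  qed simp
  moreover have "arccos_turns s \<notin> A \<union> B" using A B e by auto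
  ultimately have "Ppm s s powr t + 2 * (\<Sum>k\<in>K. Ppm s (q k) powr t)
      = (\<Sum>x\<in>insert (arccos_turns s) (A \<union> B). Gpm s x powr t)"
    by (simp add: sum.union_disjoint)
  also have "\<dots> \<le> (\<Sum>x\<in>max_points. Gpm s x powr t)"
  proof (rule sum_mono2[OF finite_max_points])
    have "local_max_point (Gpm s) x" if "x \<in> A \<union> B" for x
      using that local_max_at_interior_peak by (auto simp: A_def B_def K_def)
    then show "insert (arccos_turns s) (A \<union> B) \<subseteq> max_points"
      using local_max_at_end_peak A B e by auto
  qed simp
  finally show ?thesis by (simp add: K_def)
qed

lemma period_variation_Gpm_powr_less:
  assumes "0 < t"
  shows "period_variation (\<lambda>x. Gpm s x powr t) < 2 * (\<Sum>x\<in>max_points. Gpm s x powr t)"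
  using period_variation_Gpm_powr_le_peaks[of t] sum_max_points_ge[of t] assms by simp

lemma period_variation_Gpm_le:
  "period_variation (Gpm s) \<le> 2 * (Ppm s s - 1 + 2 * (\<Sum>k\<in>interior_peaks s. Ppm s (q k)))"
proof -
  have "Gpm s = (\<lambda>x. Gpm s x powr 1)" using Gpm_nonneg[OF sign] by (simp add: fun_eq_iff)
  moreover have "Ppm s s powr 1 = Ppm s s" using Ppm_nonneg[OF sign, of s] sign by auto
  moreover have "(\<Sum>k\<in>interior_peaks s. Ppm s (q k) powr 1) = (\<Sum>k\<in>interior_peaks s. Ppm s (q k))"
    using Ppm_q_nonneg by (intro sum.cong) (auto simp: interior_peaks_def)
  ultimately show ?thesis using period_variation_Gpm_powr_le_peaks[of 1] by simp
qed

lemma period_variation_Gpm_le_enclosure: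
  assumes "\<And>k. k \<in> interior_peaks s \<Longrightarrow> -1 \<le> a k \<and> a k \<le> q k \<and> q k \<le> a k + \<delta>"
  shows "period_variation (Gpm s)
    \<le> 2 * (Ppm s s - 1 + 2 * (\<Sum>k\<in>interior_peaks s. Ppm s (a k) + 3208 * \<delta>))"
proof -
  have "Ppm s (q k) \<le> Ppm s (a k) + 3208 * \<delta>" if "k \<in> interior_peaks s" for k
  proof -
    have "q k \<le> 1" using that q_bounds[of k] by (auto simp: interior_peaks_def)
    then have "Ppm s (q k) \<le> Ppm s (a k) + 3208 * (q k - a k)"
      using Ppm_lipschitz[OF sign] assms[OF that] by simp
    also have "\<dots> \<le> Ppm s (a k) + 3208 * \<delta>" using assms[OF that] by simp
    finally show ?thesis .
  qed
  then have "(\<Sum>k\<in>interior_peaks s. Ppm s (q k))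
      \<le> (\<Sum>k\<in>interior_peaks s. Ppm s (a k) + 3208 * \<delta>)"
    by (rule sum_mono)
  then show ?thesis using period_variation_Gpm_le by simp
qed

end

section \<open>Locating the critical points\<close>

lemma Ppm_zigzag_of_enclosures:
  assumes sign: "s = 1 \<or> s = -1"
    and ab: "\<And>i. i \<in> {1..6} \<Longrightarrow> a i < b i" and ba: "\<And>i. i \<in> {1..<6} \<Longrightarrow> b i < a (Suc i)"
    and ends: "-1 < a 1" "b 6 < 1"
    and sign_a: "\<And>i. i \<in> {1..6} \<Longrightarrow> 0 < s * (-1)^(i-1) * poly (dPpm s) (a i)"
    and sign_b: "\<And>i. i \<in> {1..6} \<Longrightarrow> 0 < s * (-1)^i * poly (dPpm s) (b i)"
  obtains q where "Ppm_zigzag s q" "\<And>i. i \<in> {1..6} \<Longrightarrow> a i < q i \<and> q i < b i"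
proof -
  have "poly (dPpm s) (a i) * poly (dPpm s) (b i) < 0" if i: "i \<in> {1..6}" for i
  proof -
    have "(-1::real)^i = - ((-1)^(i-1))" using i by (cases i) auto
    moreover have "s * s = 1" "(-1::real)^(i-1) * (-1)^(i-1) = 1"
      using sign by (auto simp: power_mult_distrib[symmetric])
    ultimately have "(s * (-1)^(i-1) * poly (dPpm s) (a i)) * (s * (-1)^i * poly (dPpm s) (b i))
        = - (poly (dPpm s) (a i) * poly (dPpm s) (b i))"
      by (simp add: algebra_simps)
    then show ?thesis using mult_pos_pos[OF sign_a[OF i] sign_b[OF i]] by simp
  qed
  then obtain r where r_mono: "strict_mono_on {1..6} r"
    and r_enclosed: "\<And>i. i \<in> {1..6} \<Longrightarrow> a i < r i \<and> r i < b i"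
    and roots: "{x. poly (dPpm s) x = 0} = r ` {1..6}"
    using poly_roots_isolated[of 6 "dPpm s" a b] degree_dPpm ab ba by auto
  define q where "q k = (if k = 0 then -1 else if k = 7 then 1 else r k)" for k
  have q_r: "q i = r i" if "i \<in> {1..6}" for i using that by (simp add: q_def)
  have q_strict_mono: "strict_mono_on {..7} q"
  proof (rule strict_mono_on_atMost_SucI)
    fix k :: nat assume "k < 7"
    then consider "k = 0" | "k \<in> {1..<6}" | "k = 6" by fastforce
    then show "q k < q (Suc k)"
    proof cases
      case 1 then show ?thesis using ends r_enclosed[of 1] by (simp add: q_def)
    next
      case 2
      then show ?thesis using ba[of k] r_enclosed[of k] r_enclosed[of "Suc k"] by (auto simp: q_def)
    next
      case 3 then show ?thesis using ends r_enclosed[of 6] by (simp add: q_def)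
    qed
  qed
  have "Ppm_zigzag s q"
  proof
    show "{c. poly (dPpm s) c = 0} = q ` {1..6}" using roots q_r by simp
    fix k :: nat assume "k < 7"
    define w where "w = (if k = 0 then a 1 else b k)"
    consider (first) "k = 0" | (middle) "k \<in> {1..<6}" | (last) "k = 6" using \<open>k < 7\<close> by fastforce
    then have w: "q k < w \<and> w < q (Suc k) \<and> 0 < s * (-1)^k * poly (dPpm s) w"
    proof cases
      case first
      then show ?thesis using ends r_enclosed[of 1] sign_a[of 1] by (simp add: q_def w_def)
    next
      case middle
      then show ?thesis
        using ba[of k] r_enclosed[of k] r_enclosed[of "Suc k"] sign_b[of k]
        by (auto simp: q_def w_def)
    next
      case last
      then show ?thesis using ends r_enclosed[of 6] sign_b[of 6] by (simp add: q_def w_def)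
    qed
    have "s * (-1)^k * poly (dPpm s) c \<noteq> 0" if "q k < c" "c < q (Suc k)" for c
    proof
      assume "s * (-1)^k * poly (dPpm s) c = 0"
      then have "c \<in> q ` {1..6}" using roots q_r sign by auto
      then obtain i where "i \<in> {1..6}" "c = q i" by blast
      then show False
        using that \<open>k < 7\<close> strict_mono_on_less[OF q_strict_mono, of k i]
          strict_mono_on_less[OF q_strict_mono, of i "Suc k"] by force
    qed
    then show "mono_on {q k..q (Suc k)} (\<lambda>c. s * (-1)^k * Ppm s c)"
      using w
      by (intro mono_on_if_deriv_nonvanishing[where f' = "\<lambda>c. s * (-1)^k * poly (dPpm s) c"])
        (auto intro!: derivative_eq_intros Ppm_has_derivative)
  qed (use sign q_strict_mono in \<open>simp_all add: q_def\<close>)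
  then show thesis using that r_enclosed q_r by auto
qed

text \<open>Left endpoints of intervals of width \<open>2\<cdot>10\<^sup>-\<^sup>5\<close> isolating the six critical points of
  \<open>Ppm s\<close> in \<open>(-1, 1)\<close>, found numerically.\<close>
definition critical_point_enclosure :: "real \<Rightarrow> nat \<Rightarrow> real" where
  "critical_point_enclosure s i =
     (if s = 1 then [0, -94619, -74275, -32109, 11535, 58188, 88416]
      else [0, -95698, -71426, -35677, 14596, 56409, 88933]) ! i / 100000"

lemma Ppm_zigzag_exists:
  assumes "s = 1 \<or> s = -1"
  obtains q where "Ppm_zigzag s q"
    "\<And>i. i \<in> {1..6} \<Longrightarrow>
      critical_point_enclosure s i < q i \<and> q i < critical_point_enclosure s i + 2/100000"
proof (rule Ppm_zigzag_of_enclosures[OF assms])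
  have i: "i \<in> {1..6} \<Longrightarrow> i \<in> {1, 2, 3, 4, 5, 6}" for i :: nat by auto
  let ?e = "critical_point_enclosure s"
  show "?e i < ?e i + 2/100000" for i by simp
  show "?e i + 2/100000 < ?e (Suc i)" if "i \<in> {1..<6}" for i
  proof -
    have "i \<in> {1, 2, 3, 4, 5}" using that by auto
    then show ?thesis using assms by (auto simp: critical_point_enclosure_def)
  qed
  show "-1 < ?e 1" "?e 6 + 2/100000 < 1"
    using assms by (auto simp: critical_point_enclosure_def)
  show "0 < s * (-1)^(i-1) * poly (dPpm s) (?e i)" if "i \<in> {1..6}" for i
    using i[OF that] assms by (auto simp: critical_point_enclosure_def dPpm_def)
  show "0 < s * (-1)^i * poly (dPpm s) (?e i + 2/100000)" if "i \<in> {1..6}" for i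
    using i[OF that] assms by (auto simp: critical_point_enclosure_def dPpm_def)
qed blast

lemma interior_peaks_sign:
  "s = 1 \<or> s = -1 \<Longrightarrow> interior_peaks s = (if s = 1 then {1, 3, 5} else {2, 4, 6})"
  by (auto simp: interior_peaks_def numeral_eq_Suc le_Suc_eq)

lemma enclosure_variation_bound:
  assumes "s = 1 \<or> s = -1"
  shows "2 * (Ppm s s - 1 + 2 * (\<Sum>k\<in>interior_peaks s.
    Ppm s (critical_point_enclosure s k) + 3208 * (2/100000))) < 74"
  using assms by (auto simp: interior_peaks_sign Ppm_def critical_point_enclosure_def power_divide)

theorem corollary2:
  fixes s :: real
  assumes "s = 1 \<or> s = -1"
  defines "Z \<equiv> {x \<in> {0..<1}. local_max_point (Gpm s) x}"
  shows "(\<forall>t>0. period_variation (\<lambda>x. Gpm s x powr t)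
                  < 2 * (\<Sum>\<zeta>\<in>Z. Gpm s \<zeta> powr t))
         \<and> period_variation (Gpm s) < 74"
proof -
  obtain q where "Ppm_zigzag s q" and enclosed:
    "\<And>i. i \<in> {1..6} \<Longrightarrow>
      critical_point_enclosure s i < q i \<and> q i < critical_point_enclosure s i + 2/100000"
    using Ppm_zigzag_exists[OF assms(1)] by blast
  interpret Ppm_zigzag s q by fact
  have "period_variation (Gpm s)
      \<le> 2 * (Ppm s s - 1 + 2 * (\<Sum>k\<in>interior_peaks s.
          Ppm s (critical_point_enclosure s k) + 3208 * (2/100000)))"
  proof (rule period_variation_Gpm_le_enclosure)
    fix k assume "k \<in> interior_peaks s"
    then show "-1 \<le> critical_point_enclosure s k \<and> critical_point_enclosure s k \<le> q k
        \<and> q k \<le> critical_point_enclosure s k + 2/100000"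
      using assms(1) enclosed[of k] by (auto simp: interior_peaks_sign critical_point_enclosure_def)
  qed
  then show ?thesis
    unfolding Z_def using period_variation_Gpm_powr_less enclosure_variation_bound[OF assms(1)]
    by simp
qed

end
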